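(* Let $\tau\in\mathbb{R}\setminus\mathbb{Q}$ and let $\bar\varphi\in\mathbb{T}$, and put $\bar\varphi'=R_{1/2}\bar\varphi$. Then there exist a Cantor set $C\subset\mathbb{T}$ with $R_{1/2}C=C$ and a Cantor function $\mathcal{P}:\mathbb{T}\to\mathbb{T}$ associated to $C$ such that: (a) $\mathcal{P}(A)=\{\overline{\varphi+n\tau}: n\in\mathbb{Z}\}\cup\{\overline{\varphi'+n\tau}: n\in\mathbb{Z}\}$, where $A$ is the set of accessible points of $C$; (b) $\mathcal{P}$ is $\mathbb{Z}_2$-equivariant, i.e. $\mathcal{P}\circ R_{1/2}=R_{1/2}\circ\mathcal{P}$.
   Context: $\mathbb{T}=\mathbb{R}/\mathbb{Z}$ with points $\bar\theta=\theta+\mathbb{Z}$; the rotation $R_{\bar\eta}:\mathbb{T}\to\mathbb{T}$ is $R_{\bar\eta}(\bar\theta)=\overline{\theta+\eta}$ (written $R_\eta$ for $\eta\in\mathbb{R}$). A Cantor set is a compact, totally disconnected, perfect subset $C\subset\mathbb{T}$; it can be written $C=\mathbb{T}\setminus\bigcup_{k\ge0}\dot\alpha_k$ where $\{\alpha_k\}$ are pairwise disjoint closed arcs (the closures of the gaps) and $\dot\alpha_k$ their interiors. The accessible set $A$ of $C$ is the set of endpoints of all the arcs $\alpha_k$. Define $\bar\theta_1\sim\bar\theta_2$ if $\bar\theta_1=\bar\theta_2$ or both lie in the same $\alpha_k$. A Cantor function associated to $C$ is a continuous, cyclic-order-preserving (degree one, monotone) map $\mathcal{P}:\mathbb{T}\to\mathbb{T}$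 with $\mathcal{P}(\bar\theta_1)=\mathcal{P}(\bar\theta_2)$ if and only if $\bar\theta_1\sim\bar\theta_2$. A map $g:\mathbb{T}\to\mathbb{T}$ is $\mathbb{Z}_m$-equivariant if $g(\bar\theta+\tfrac1m)=g(\bar\theta)+\tfrac1m$ for all $\bar\theta\in\mathbb{T}$. *)

theory Defs
  imports "HOL-Analysis.Analysis"
begin

text \<open>A subset of T is represented by its (1-periodic) preimage in R, a point of T
  by any real representative, and a continuous degree-one monotone
  (cyclic-order-preserving) circle map by a lift F : R -> R which is
  continuous, nondecreasing and satisfies F (x + 1) = F x + 1.
  Two reals represent the same point of T iff their difference is an integer.\<close>

definition periodic_set :: "real set \<Rightarrow> bool" where
  "periodic_set C \<longleftrightarrow> (\<forall>x. x \<in> C \<longleftrightarrow> x + 1 \<in> C)"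

definition totally_disconnected_set :: "real set \<Rightarrow> bool" where
  "totally_disconnected_set C \<longleftrightarrow> (\<forall>S. S \<subseteq> C \<and> connected S \<longrightarrow> (\<exists>a. S \<subseteq> {a}))"

text \<open>Cantor set in T (lifted): nonempty, compact (= closed periodic lift),
  totally disconnected and perfect.\<close>
definition cantor_set :: "real set \<Rightarrow> bool" where
  "cantor_set C \<longleftrightarrow> C \<noteq> {} \<and> periodic_set C \<and> closed C \<and>
     totally_disconnected_set C \<and> (\<forall>x\<in>C. x islimpt C)"

definition gap_arc :: "real set \<Rightarrow> real \<Rightarrow> real \<Rightarrow> bool" where
  "gap_arc C a b \<longleftrightarrow> a < b \<and> a \<in> C \<and> b \<in> C \<and> {a<..<b} \<inter> C = {}"

definition accessible :: "real set \<Rightarrow> real set" where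
  "accessible C = {x. \<exists>a b. gap_arc C a b \<and> (x = a \<or> x = b)}"

definition gap_equiv :: "real set \<Rightarrow> real \<Rightarrow> real \<Rightarrow> bool" where
  "gap_equiv C x y \<longleftrightarrow> x - y \<in> \<int> \<or>
     (\<exists>a b. gap_arc C a b \<and> (\<exists>n::int. x + of_int n \<in> {a..b}) \<and> (\<exists>m::int. y + of_int m \<in> {a..b}))"

definition circle_monotone_lift :: "(real \<Rightarrow> real) \<Rightarrow> bool" where
  "circle_monotone_lift F \<longleftrightarrow> continuous_on UNIV F \<and> mono F \<and> (\<forall>x. F (x + 1) = F x + 1)"

definition cantor_function :: "real set \<Rightarrow> (real \<Rightarrow> real) \<Rightarrow> bool" where
  "cantor_function C F \<longleftrightarrow> circle_monotone_lift F \<and>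
     (\<forall>x y. F x - F y \<in> \<int> \<longleftrightarrow> gap_equiv C x y)"

end

theory Submission
  imports Defs
begin

(* Enumerate a
   countable set of jump points, closed under translation by 1/2, as c k + j/2.
   A strictly increasing "stair" low(y) = (y + sum_k 2^-k step(c k, y)) / 5
   jumps by 2^-k/5 at every point c k + j/2 and commutes with translation by 1/2;
   high(y) is its right limit.  The Cantor set is the line with the gaps
   (low d, high d), d a jump, removed, and P is the generalized inverse of low,
   collapsing each gap [low d, high d] to d.  All properties of C and P other
   than total disconnectedness hold for an arbitrary enumeration c; total
   disconnectedness needs the jump set to be dense, which for the rotation orbits
   is Kronecker's theorem. *)

definition upper_inverse :: "(real \<Rightarrow> real) \<Rightarrow> real \<Rightarrow> real" where
  "upper_inverse f x = Sup {y. f y \<le> x}"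

locale unbounded_strict_mono =
  fixes f :: "real \<Rightarrow> real"
  assumes strict: "y < z \<Longrightarrow> f y < f z"
    and unbounded_below: "\<exists>y. f y \<le> x"
    and unbounded_above: "\<exists>y. x < f y"
begin

lemma sublevel_bdd_above: "bdd_above {y. f y \<le> x}"
proof -
  obtain y1 where y1: "x < f y1" using unbounded_above by blast
  have "y \<le> y1" if "f y \<le> x" for y
    using strict[of y1 y] that y1 by (cases "y \<le> y1") auto
  then show ?thesis unfolding bdd_above_def by blast
qed

lemma less_upper_inverseD:
  assumes "z < upper_inverse f x" shows "f z \<le> x"
proof -
  have "{y. f y \<le> x} \<noteq> {}" using unbounded_below by blast
  then obtain s where "f s \<le> x" "z < s"
    using assms less_cSup_iff[OF _ sublevel_bdd_above] unfolding upper_inverse_def by auto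
  then show ?thesis using strict[of z s] by simp
qed

lemma upper_inverse_lessD:
  assumes "upper_inverse f x < z" shows "x < f z"
proof (rule ccontr)
  assume "\<not> x < f z"
  then have "z \<le> upper_inverse f x"
    unfolding upper_inverse_def by (intro cSup_upper sublevel_bdd_above) simp
  then show False using assms by simp
qed

lemma upper_inverse_eqI:
  assumes below: "\<And>z. z < t \<Longrightarrow> f z \<le> x" and above: "\<And>z. t < z \<Longrightarrow> x < f z"
  shows "upper_inverse f x = t"
proof (rule ccontr)
  define m where "m = (upper_inverse f x + t) / 2"
  assume "upper_inverse f x \<noteq> t"
  show False
  proof (cases "upper_inverse f x < t")
    case True
    then show False using below[of m] upper_inverse_lessD[of x m] unfolding m_def by simp
  next
    case False
    then show False
      using above[of m] less_upper_inverseD[of m x] \<open>upper_inverse f x \<noteq> t\<close> unfolding m_def by simp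
  qed
qed

lemma upper_inverse_apply: "upper_inverse f (f y) = y"
  by (rule upper_inverse_eqI) (auto intro: strict less_imp_le)

lemma upper_inverse_mono: "x \<le> x' \<Longrightarrow> upper_inverse f x \<le> upper_inverse f x'"
  using less_upper_inverseD upper_inverse_lessD upper_inverse_eqI
  by (metis dense not_le order.strict_trans1 order.strict_trans2)

text \<open>The upper inverse has no jumps: a jump of it would force f to map an interval
  into a single point, contradicting strict monotonicity.\<close>
lemma upper_inverse_continuous: "continuous_on UNIV (upper_inverse f)"
proof (rule continuous_at_imp_continuous_on, intro ballI)
  fix x
  show "isCont (upper_inverse f) x" unfolding isCont_def
  proof (rule order_tendstoI)
    fix a assume a: "a < upper_inverse f x"
    define m where "m = (a + upper_inverse f x) / 2"
    have "f m < f ((m + upper_inverse f x) / 2)" using a unfolding m_def by (intro strict) simp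
    also have "\<dots> \<le> x" using a unfolding m_def by (intro less_upper_inverseD) simp
    finally have "eventually (\<lambda>x'. f m < x') (at x)" by (rule order_tendstoD(1)[OF tendsto_ident_at])
    then show "eventually (\<lambda>x'. a < upper_inverse f x') (at x)"
    proof (rule eventually_mono)
      fix x' assume "f m < x'"
      then have "m \<le> upper_inverse f x'" using upper_inverse_mono[of "f m" x'] upper_inverse_apply by simp
      then show "a < upper_inverse f x'" using a unfolding m_def by simp
    qed
  next
    fix a assume a: "upper_inverse f x < a"
    define m where "m = (a + upper_inverse f x) / 2"
    have "x < f m" using a unfolding m_def by (intro upper_inverse_lessD) simp
    then have "eventually (\<lambda>x'. x' < f m) (at x)" by (rule order_tendstoD(2)[OF tendsto_ident_at])
    then show "eventually (\<lambda>x'. upper_inverse f x' < a) (at x)"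
    proof (rule eventually_mono)
      fix x' assume "x' < f m"
      then have "upper_inverse f x' \<le> m" using upper_inverse_mono[of x' "f m"] upper_inverse_apply by simp
      then show "upper_inverse f x' < a" using a unfolding m_def by simp
    qed
  qed
qed

end

text \<open>Elementary steps: step a jumps by 1 at every point a + j/2 and is left continuous;
  step_plus a is its right-continuous version.  The normalization makes both vanish
  near 0, giving a linear bound that is uniform in a.\<close>
definition step :: "real \<Rightarrow> real \<Rightarrow> int" where
  "step a y = \<lceil>2 * (y - a)\<rceil> - \<lceil>-2 * a\<rceil>"

definition step_plus :: "real \<Rightarrow> real \<Rightarrow> int" where
  "step_plus a y = \<lfloor>2 * (y - a)\<rfloor> + 1 - \<lceil>-2 * a\<rceil>"

lemma step_bound: "\<bar>real_of_int (step a y)\<bar> \<le> 2 * \<bar>y\<bar> + 2"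
  using ceiling_correct[of "2 * (y - a)"] ceiling_correct[of "-2 * a"]
  unfolding step_def by (simp add: abs_le_iff) linarith

lemma step_plus_bound: "\<bar>real_of_int (step_plus a y)\<bar> \<le> 2 * \<bar>y\<bar> + 2"
  using floor_correct[of "2 * (y - a)"] ceiling_correct[of "-2 * a"]
  unfolding step_plus_def by (simp add: abs_le_iff) linarith

lemma step_shift: "step a (y + of_int j / 2) = step a y + j"
proof -
  have e: "2 * (y + of_int j / 2 - a) = 2 * (y - a) + of_int j" by (simp add: algebra_simps)
  show ?thesis unfolding step_def e ceiling_add_of_int by simp
qed

lemma step_plus_shift: "step_plus a (y + of_int j / 2) = step_plus a y + j"
proof -
  have e: "2 * (y + of_int j / 2 - a) = 2 * (y - a) + of_int j" by (simp add: algebra_simps)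
  show ?thesis unfolding step_plus_def e floor_add_int[symmetric] by simp
qed

lemma step_plus_eq: "step_plus a y = step a y + (if 2 * (y - a) \<in> \<int> then 1 else 0)"
proof -
  have "2 * (y - a) \<in> \<int> \<longleftrightarrow> 2 * (y - a) = of_int \<lfloor>2 * (y - a)\<rfloor>"
    by (metis Ints_cases Ints_of_int floor_of_int)
  then show ?thesis unfolding step_def step_plus_def ceiling_altdef[of "2 * (y - a)"] by auto
qed

lemma step_mono: "y \<le> z \<Longrightarrow> step a y \<le> step a z"
  unfolding step_def by (simp add: ceiling_mono)

lemma step_plus_le_step: "y < z \<Longrightarrow> step_plus a y \<le> step a z"
  unfolding step_def step_plus_def
  using of_int_floor_le[of "2 * (y - a)"] le_of_int_ceiling[of "2 * (z - a)"]
  by (smt (verit) of_int_less_iff)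

lemma step_eventually_left:
  "eventually (\<lambda>z. step a z = step a t) (at_left t)"
proof -
  define s where "s = 2 * (t - a)"
  define d where "d = (s - (of_int \<lceil>s\<rceil> - 1)) / 2"
  have "d > 0" unfolding d_def using ceiling_correct[of s] by simp
  then have "eventually (\<lambda>z. z \<in> {t - d<..<t}) (at_left t)" by (intro eventually_at_left_real) simp
  then show ?thesis
  proof (rule eventually_mono)
    fix z assume z: "z \<in> {t - d<..<t}"
    have "of_int \<lceil>s\<rceil> - 1 < 2 * (z - a)" using z unfolding d_def s_def by (auto simp: field_simps)
    moreover have "2 * (z - a) < s" using z unfolding s_def by simp
    then have "2 * (z - a) \<le> of_int \<lceil>s\<rceil>" using le_of_int_ceiling[of s] by linarith
    ultimately show "step a z = step a t" unfolding step_def s_def using ceiling_unique by metis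
  qed
qed

lemma step_eventually_right:
  "eventually (\<lambda>z. step a z = step_plus a t) (at_right t)"
proof -
  define s where "s = 2 * (t - a)"
  define d where "d = (of_int \<lfloor>s\<rfloor> + 1 - s) / 2"
  have "d > 0" unfolding d_def using floor_correct[of s] by simp
  then have "eventually (\<lambda>z. z \<in> {t<..<t + d}) (at_right t)" by (intro eventually_at_right_real) simp
  then show ?thesis
  proof (rule eventually_mono)
    fix z assume z: "z \<in> {t<..<t + d}"
    have "s < 2 * (z - a)" using z unfolding s_def by simp
    then have "of_int (\<lfloor>s\<rfloor> + 1) - 1 < 2 * (z - a)" using of_int_floor_le[of s] by linarith
    moreover have "2 * (z - a) \<le> of_int (\<lfloor>s\<rfloor> + 1)" using z unfolding d_def s_def by (auto simp: field_simps)
    ultimately show "step a z = step_plus a t" unfolding step_def step_plus_def s_def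
      using ceiling_unique by (metis diff_add_cancel)
  qed
qed

lemma islimpt_by_tendsto:
  assumes lim: "(f \<longlongrightarrow> x) F" and "F \<noteq> bot"
    and approach: "eventually (\<lambda>z. f z \<in> S \<and> f z \<noteq> x) F"
  shows "x islimpt S"
proof (rule islimptI)
  fix T assume "x \<in> T" "open T"
  then have "eventually (\<lambda>z. f z \<in> T) F" using topological_tendstoD[OF lim] by blast
  then obtain z where "f z \<in> T" "f z \<in> S" "f z \<noteq> x"
    using eventually_happens'[OF \<open>F \<noteq> bot\<close> eventually_conj[OF _ approach]] by blast
  then show "\<exists>y\<in>S. y \<in> T \<and> y \<noteq> x" by blast
qed

locale staircase =
  fixes c :: "nat \<Rightarrow> real"
begin

definition jumps :: "real set" where
  "jumps = {c k + of_int j / 2 | k j. True}"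

lemma jumps_iff: "y \<in> jumps \<longleftrightarrow> (\<exists>k. 2 * (y - c k) \<in> \<int>)"
proof
  assume "y \<in> jumps"
  then obtain k j where "y = c k + of_int j / 2" unfolding jumps_def by blast
  then have "2 * (y - c k) = of_int j" by simp
  then show "\<exists>k. 2 * (y - c k) \<in> \<int>" by (metis Ints_of_int)
next
  assume "\<exists>k. 2 * (y - c k) \<in> \<int>"
  then obtain k j where "2 * (y - c k) = of_int j" by (auto elim: Ints_cases)
  then have "y = c k + of_int j / 2" by simp
  then show "y \<in> jumps" unfolding jumps_def by blast
qed

definition stair :: "(real \<Rightarrow> real \<Rightarrow> int) \<Rightarrow> real \<Rightarrow> real" where
  "stair s y = (y + (\<Sum>k. (1/2)^k * real_of_int (s (c k) y))) / 5"

abbreviation low :: "real \<Rightarrow> real" where "low \<equiv> stair step"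
abbreviation high :: "real \<Rightarrow> real" where "high \<equiv> stair step_plus"

lemma weighted_bound:
  assumes "\<bar>real_of_int v\<bar> \<le> B"
  shows "\<bar>(1/2::real)^k * real_of_int v\<bar> \<le> (1/2)^k * B"
  using mult_left_mono[OF assms, of "(1/2::real)^k"] by (simp add: abs_mult)

lemma summable_weighted:
  assumes bound: "\<And>a y. \<bar>real_of_int (s a y)\<bar> \<le> 2 * \<bar>y\<bar> + 2"
  shows "summable (\<lambda>k. (1/2::real)^k * real_of_int (s (c k) y))"
proof (rule summable_comparison_test')
  show "summable (\<lambda>k. (1/2::real)^k * (2 * \<bar>y\<bar> + 2))"
    by (intro summable_mult2 summable_geometric) simp
  show "norm ((1/2::real)^k * real_of_int (s (c k) y)) \<le> (1/2)^k * (2 * \<bar>y\<bar> + 2)" for k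
    using weighted_bound[OF bound] by simp
qed

text \<open>A stair built from steps that move by j under translation by j/2
  is itself equivariant under translation by half-integers (the weights sum to 2).\<close>
lemma stair_shift:
  assumes bound: "\<And>a y. \<bar>real_of_int (s a y)\<bar> \<le> 2 * \<bar>y\<bar> + 2"
    and shift: "\<And>a y j. s a (y + of_int j / 2) = s a y + j"
  shows "stair s (y + of_int j / 2) = stair s y + of_int j / 2"
proof -
  have geometric: "(\<Sum>k. (1/2::real)^k) = 2" using suminf_geometric[of "1/2::real"] by simp
  have "(\<Sum>k. (1/2::real)^k * real_of_int (s (c k) (y + of_int j / 2)))
      = (\<Sum>k. (1/2)^k * real_of_int (s (c k) y) + of_int j * (1/2)^k)"
    by (simp add: shift algebra_simps)
  also have "\<dots> = (\<Sum>k. (1/2)^k * real_of_int (s (c k) y)) + of_int j * 2"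
    using summable_weighted[OF bound] summable_geometric[of "1/2::real"]
    by (subst suminf_add[symmetric]) (auto simp: suminf_mult geometric)
  finally show ?thesis unfolding stair_def by (simp add: field_simps)
qed

lemma stair_diff_ge:
  assumes bound: "\<And>a y. \<bar>real_of_int (s a y)\<bar> \<le> 2 * \<bar>y\<bar> + 2"
    and bound': "\<And>a y. \<bar>real_of_int (s' a y)\<bar> \<le> 2 * \<bar>y\<bar> + 2"
    and le: "\<And>a. s a y \<le> s' a z"
  shows "(z - y) / 5 \<le> stair s' z - stair s y"
proof -
  have "(\<Sum>k. (1/2::real)^k * real_of_int (s (c k) y)) \<le> (\<Sum>k. (1/2)^k * real_of_int (s' (c k) z))"
    using le by (intro suminf_le summable_weighted bound bound' mult_left_mono) auto
  then show ?thesis unfolding stair_def by (simp add: field_simps)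
qed

lemma stair_limit:
  assumes bound: "\<And>a y. \<bar>real_of_int (s a y)\<bar> \<le> 2 * \<bar>y\<bar> + 2"
    and steps: "\<And>k. eventually (\<lambda>z. s (c k) z = s' (c k) t) (at t within S)"
    and nontrivial: "at t within S \<noteq> bot"
  shows "(stair s \<longlongrightarrow> stair s' t) (at t within S)"
proof -
  define M where "M k = (1/2::real)^k * (2 * (\<bar>t\<bar> + 1) + 2)" for k
  have near: "eventually (\<lambda>z. z \<in> {t - 1<..<t + 1}) (at t within S)"
    by (rule topological_tendstoD[OF tendsto_ident_at]) auto
  have "norm ((1/2::real)^k * real_of_int (s (c k) z)) \<le> M k" if "z \<in> {t - 1<..<t + 1}" for k z
  proof -
    have "\<bar>real_of_int (s (c k) z)\<bar> \<le> 2 * (\<bar>t\<bar> + 1) + 2" using bound[of "c k" z] that by auto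
    then show ?thesis unfolding M_def using weighted_bound by simp
  qed
  then have dominated: "eventually (\<lambda>(k, z). norm ((1/2::real)^k * real_of_int (s (c k) z)) \<le> M k)
      (at_top \<times>\<^sub>F (at t within S))"
    unfolding eventually_prod_filter using near by (intro exI[of _ "\<lambda>_. True"] exI conjI) auto
  have "summable M" unfolding M_def by (intro summable_mult2 summable_geometric) simp
  have "((\<lambda>z. (1/2::real)^k * real_of_int (s (c k) z)) \<longlongrightarrow> (1/2)^k * real_of_int (s' (c k) t))
      (at t within S)" for k
    by (rule tendsto_eventually, rule eventually_mono[OF steps]) simp
  from tannerys_theorem[OF this dominated \<open>summable M\<close> nontrivial]
  have "((\<lambda>z. \<Sum>k. (1/2::real)^k * real_of_int (s (c k) z))
      \<longlongrightarrow> (\<Sum>k. (1/2)^k * real_of_int (s' (c k) t))) (at t within S)" by blast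
  then show ?thesis unfolding stair_def[abs_def]
    by (intro tendsto_divide tendsto_add tendsto_ident_at tendsto_const) simp_all
qed

lemma low_shift: "low (y + of_int j / 2) = low y + of_int j / 2"
  by (rule stair_shift[OF step_bound step_shift])

lemma high_shift: "high (y + of_int j / 2) = high y + of_int j / 2"
  by (rule stair_shift[OF step_plus_bound step_plus_shift])

lemma low_strict: "y < z \<Longrightarrow> low y < low z"
  using stair_diff_ge[of step step y z, OF step_bound step_bound step_mono] by simp

lemma high_less_low: "y < z \<Longrightarrow> high y < low z"
  using stair_diff_ge[of step_plus step y z, OF step_plus_bound step_bound step_plus_le_step] by simp

lemma low_le_high: "low y \<le> high y"
  using stair_diff_ge[of step step_plus y y, OF step_bound step_plus_bound] by (simp add: step_plus_eq)

lemma low_less_high_iff: "low y < high y \<longleftrightarrow> y \<in> jumps"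
proof -
  define w where "w k = (1/2::real)^k * real_of_int (step_plus (c k) y - step (c k) y)" for k
  have w_nonneg: "0 \<le> w k" for k unfolding w_def by (simp add: step_plus_eq)
  have summable_plus: "summable (\<lambda>k. (1/2::real)^k * real_of_int (step_plus (c k) y))"
    and summable_step: "summable (\<lambda>k. (1/2::real)^k * real_of_int (step (c k) y))"
    by (rule summable_weighted, rule step_plus_bound, rule summable_weighted, rule step_bound)
  have w_eq: "w = (\<lambda>k. (1/2)^k * real_of_int (step_plus (c k) y) - (1/2)^k * real_of_int (step (c k) y))"
    unfolding w_def by (simp add: fun_eq_iff algebra_simps)
  have "summable w" unfolding w_eq by (rule summable_diff[OF summable_plus summable_step])
  have "high y - low y = (\<Sum>k. w k) / 5"
    unfolding stair_def w_eq suminf_diff[OF summable_plus summable_step, symmetric] by (simp add: field_simps)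
  then have "low y < high y \<longleftrightarrow> 0 < (\<Sum>k. w k)" by linarith
  also have "\<dots> \<longleftrightarrow> (\<exists>k. 0 < w k)" using suminf_pos_iff[OF \<open>summable w\<close> w_nonneg] by simp
  also have "\<dots> \<longleftrightarrow> y \<in> jumps" unfolding jumps_iff w_def by (simp add: step_plus_eq)
  finally show ?thesis .
qed

lemma high_eq_low: "y \<notin> jumps \<Longrightarrow> high y = low y"
  using low_le_high[of y] low_less_high_iff[of y] by simp

lemma low_left_limit: "(low \<longlongrightarrow> low t) (at_left t)"
  by (rule stair_limit[OF step_bound step_eventually_left trivial_limit_at_left_real])

lemma low_right_limit: "(low \<longlongrightarrow> high t) (at_right t)"
  by (rule stair_limit[OF step_bound step_eventually_right trivial_limit_at_right_real])

text \<open>low is unbounded in both directions by equivariance, so it has an upper inverse.\<close>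
sublocale low: unbounded_strict_mono low
proof
  fix x :: real
  define j where "j = \<lfloor>2 * (x - low 0)\<rfloor>"
  have "of_int j \<le> 2 * (x - low 0)" "2 * (x - low 0) < of_int (j + 1)"
    unfolding j_def by linarith+
  then have "low (0 + of_int j / 2) \<le> x" "x < low (0 + of_int (j + 1) / 2)"
    unfolding low_shift by (simp_all add: field_simps)
  then show "\<exists>y. low y \<le> x" "\<exists>y. x < low y" by blast+
qed (rule low_strict)

abbreviation P :: "real \<Rightarrow> real" where "P \<equiv> upper_inverse low"

lemma P_low: "P (low y) = y"
  by (rule low.upper_inverse_apply)

lemma P_high: "P (high y) = y"
proof (rule low.upper_inverse_eqI)
  show "low z \<le> high y" if "z < y" for z using low_strict[OF that] low_le_high[of y] by simp
  show "high y < low z" if "y < z" for z using high_less_low[OF that] .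
qed

lemma P_shift: "P (x + of_int j / 2) = P x + of_int j / 2"
proof (rule low.upper_inverse_eqI)
  fix z
  have low_z: "low z = low (z - of_int j / 2) + of_int j / 2" using low_shift[of "z - of_int j / 2" j] by simp
  show "low z \<le> x + of_int j / 2" if "z < P x + of_int j / 2"
    using low.less_upper_inverseD[of "z - of_int j / 2" x] that low_z by simp
  show "x + of_int j / 2 < low z" if "P x + of_int j / 2 < z"
    using low.upper_inverse_lessD[of x "z - of_int j / 2"] that low_z by simp
qed

lemma low_P_le: "low (P x) \<le> x"
proof (rule tendsto_upperbound[OF low_left_limit _ trivial_limit_at_left_real])
  show "eventually (\<lambda>z. low z \<le> x) (at_left (P x))"
    by (rule eventually_mono[OF eventually_at_left_real[of "P x - 1"]])
       (auto intro: low.less_upper_inverseD)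
qed

lemma high_P_ge: "x \<le> high (P x)"
proof (rule tendsto_lowerbound[OF low_right_limit _ trivial_limit_at_right_real])
  show "eventually (\<lambda>z. x \<le> low z) (at_right (P x))"
    by (rule eventually_mono[OF eventually_at_right_real[of "P x" "P x + 1"]])
       (auto intro: low.upper_inverse_lessD less_imp_le)
qed

lemma P_eq_iff: "P x = t \<longleftrightarrow> low t \<le> x \<and> x \<le> high t"
  using low_P_le high_P_ge low.upper_inverse_mono[of "low t" x] low.upper_inverse_mono[of x "high t"]
    P_low P_high by (auto intro: order_antisym)

lemma P_lift: "circle_monotone_lift P"
  unfolding circle_monotone_lift_def
  using low.upper_inverse_continuous P_shift[of _ 2] by (auto intro: monoI low.upper_inverse_mono)

definition Cset :: "real set" where
  "Cset = - (\<Union>d\<in>jumps. {low d<..<high d})"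

lemma mem_Cset: "x \<in> Cset \<longleftrightarrow> (\<forall>d\<in>jumps. \<not> (low d < x \<and> x < high d))"
  unfolding Cset_def by auto

text \<open>The gap endpoints belong to the Cantor set, since distinct gaps are disjoint.\<close>
lemma low_in_Cset: "low y \<in> Cset"
proof -
  have "\<not> (low d < low y \<and> low y < high d)" for d
    using low_strict[of y d] high_less_low[of d y] by (cases "y < d"; cases "d < y") auto
  then show ?thesis unfolding mem_Cset by blast
qed

lemma high_in_Cset: "high y \<in> Cset"
proof -
  have "\<not> (low d < high y \<and> high y < high d)" for d
    using high_less_low[of y d] high_less_low[of d y] low_le_high[of y]
    by (cases "y < d"; cases "d < y") auto
  then show ?thesis unfolding mem_Cset by blast
qed

lemma Cset_iff: "x \<in> Cset \<longleftrightarrow> x = low (P x) \<or> x = high (P x)"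
proof
  assume x: "x \<in> Cset"
  show "x = low (P x) \<or> x = high (P x)"
  proof (rule ccontr)
    assume "\<not> ?thesis"
    then have inside: "low (P x) < x" "x < high (P x)" using low_P_le[of x] high_P_ge[of x] by auto
    then have "P x \<in> jumps" using low_less_high_iff by fastforce
    then show False using inside x unfolding mem_Cset by blast
  qed
qed (use low_in_Cset high_in_Cset in metis)

lemma Cset_shift: "x \<in> Cset \<Longrightarrow> x + of_int j / 2 \<in> Cset"
  unfolding Cset_iff using P_shift low_shift high_shift by metis

lemma Cset_closed: "closed Cset"
  unfolding Cset_def by (intro closed_Compl open_UN ballI open_greaterThanLessThan)

lemma Cset_periodic: "periodic_set Cset"
  unfolding periodic_set_def using Cset_shift[of _ 2] Cset_shift[of _ "-2"] by fastforce

lemma Cset_half_invariant: "x \<in> Cset \<longleftrightarrow> x + 1/2 \<in> Cset"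
  using Cset_shift[of x 1] Cset_shift[of "x + 1/2" "-1"] by auto

text \<open>No point of the Cantor set is isolated: a left endpoint low t is approached
  from the left by the points low z, a right endpoint high t from the right.\<close>
lemma Cset_perfect:
  assumes "x \<in> Cset" shows "x islimpt Cset"
proof -
  from assms consider "x = low (P x)" | "x = high (P x)" unfolding Cset_iff by blast
  then show ?thesis
  proof cases
    case 1
    have "eventually (\<lambda>z. low z \<in> Cset \<and> low z \<noteq> x) (at_left (P x))"
    proof (rule eventually_mono[OF eventually_at_left_real[of "P x - 1"]])
      fix z assume "z \<in> {P x - 1<..<P x}"
      then have "low z < x" using low_strict 1 by force
      then show "low z \<in> Cset \<and> low z \<noteq> x" using low_in_Cset by simp
    qed simp
    moreover have "(low \<longlongrightarrow> x) (at_left (P x))" using low_left_limit[of "P x"] unfolding 1[symmetric] .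
    ultimately show ?thesis by (intro islimpt_by_tendsto[OF _ trivial_limit_at_left_real])
  next
    case 2
    have "eventually (\<lambda>z. low z \<in> Cset \<and> low z \<noteq> x) (at_right (P x))"
    proof (rule eventually_mono[OF eventually_at_right_real[of "P x" "P x + 1"]])
      fix z assume "z \<in> {P x<..<P x + 1}"
      then have "x < low z" using high_less_low 2 by force
      then show "low z \<in> Cset \<and> low z \<noteq> x" using low_in_Cset by simp
    qed simp
    moreover have "(low \<longlongrightarrow> x) (at_right (P x))" using low_right_limit[of "P x"] unfolding 2[symmetric] .
    ultimately show ?thesis by (intro islimpt_by_tendsto[OF _ trivial_limit_at_right_real])
  qed
qed

lemma gap_arc_iff: "gap_arc Cset a b \<longleftrightarrow> (\<exists>d\<in>jumps. a = low d \<and> b = high d)"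
proof
  assume "gap_arc Cset a b"
  then have ab: "a < b" "a \<in> Cset" "b \<in> Cset" "{a<..<b} \<inter> Cset = {}" unfolding gap_arc_def by auto
  define m where "m = (a + b) / 2"
  have m: "a < m" "m < b" using ab(1) unfolding m_def by auto
  then have "m \<notin> Cset" using ab(4) by auto
  then obtain d where d: "d \<in> jumps" "low d < m" "m < high d" unfolding mem_Cset by blast
  have "low d \<notin> {a<..<b}" "high d \<notin> {a<..<b}" using ab(4) low_in_Cset high_in_Cset by blast+
  then have "\<not> a < low d" and "\<not> high d < b" using m d by auto
  moreover have "\<not> low d < a" and "\<not> b < high d"
    using ab(2,3) m d unfolding mem_Cset by auto
  ultimately show "\<exists>d\<in>jumps. a = low d \<and> b = high d" using d(1) by force
next
  assume "\<exists>d\<in>jumps. a = low d \<and> b = high d"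
  then obtain d where d: "d \<in> jumps" "a = low d" "b = high d" by blast
  then have "{a<..<b} \<inter> Cset = {}" by (auto simp: mem_Cset)
  then show "gap_arc Cset a b" using d low_less_high_iff low_in_Cset high_in_Cset by (simp add: gap_arc_def)
qed

lemma P_accessible: "P ` accessible Cset = jumps"
proof -
  have "accessible Cset = low ` jumps \<union> high ` jumps"
    unfolding accessible_def gap_arc_iff by auto
  then show ?thesis by (simp add: image_Un image_image P_low P_high)
qed

lemma P_half_shift: "P (x + 1/2) = P x + 1/2"
  using P_shift[of x 1] by simp

lemma P_int_shift: "P (x + of_int n) = P x + of_int n"
  using P_shift[of x "2 * n"] by simp

lemma gap_equiv_iff: "gap_equiv Cset x y \<longleftrightarrow> P x - P y \<in> \<int>"
proof
  assume "gap_equiv Cset x y"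
  then consider "x - y \<in> \<int>"
    | a b n m where "gap_arc Cset a b" "x + of_int n \<in> {a..b}" "y + of_int m \<in> {a..b}"
    unfolding gap_equiv_def by blast
  then show "P x - P y \<in> \<int>"
  proof cases
    case 1
    then obtain i where "x = y + of_int i" by (metis Ints_cases add.commute diff_add_cancel)
    then show ?thesis using P_int_shift by simp
  next
    case 2
    then obtain d where "low d \<le> x + of_int n" "x + of_int n \<le> high d"
      "low d \<le> y + of_int m" "y + of_int m \<le> high d"
      using gap_arc_iff by auto
    then have "P (x + of_int n) = d" "P (y + of_int m) = d" by (simp_all add: P_eq_iff)
    then have "P x - P y = of_int (m - n)" unfolding P_int_shift by simp
    then show ?thesis by simp
  qed
next
  assume "P x - P y \<in> \<int>"
  then obtain i where "P x - P y = of_int i" by (auto elim: Ints_cases)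
  then have "P (y + of_int i) = P x" by (simp add: P_int_shift)
  then have x_fibre: "low (P x) \<le> x" "x \<le> high (P x)"
    and y_fibre: "low (P x) \<le> y + of_int i" "y + of_int i \<le> high (P x)"
    using P_eq_iff by blast+
  show "gap_equiv Cset x y"
  proof (cases "P x \<in> jumps")
    case True
    then have "gap_arc Cset (low (P x)) (high (P x))" using gap_arc_iff by blast
    then show ?thesis unfolding gap_equiv_def using x_fibre y_fibre
      by (intro disjI2 exI[of _ "low (P x)"] exI[of _ "high (P x)"]) (auto intro: exI[of _ 0])
  next
    case False
    then have "x - y = of_int i" using high_eq_low x_fibre y_fibre by fastforce
    then show ?thesis unfolding gap_equiv_def by simp
  qed
qed

lemma P_cantor_function: "cantor_function Cset P"
  unfolding cantor_function_def using P_lift gap_equiv_iff by auto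

lemma interval_meets_gap:
  assumes dense: "\<And>a b. a < b \<Longrightarrow> \<exists>d\<in>jumps. a < d \<and> d < b" and "p < q"
  shows "\<exists>x. p \<le> x \<and> x \<le> q \<and> x \<notin> Cset"
proof (cases "P p < P q")
  case True
  then obtain d where d: "d \<in> jumps" "P p < d" "d < P q" using dense by blast
  define m where "m = (low d + high d) / 2"
  have "p \<le> high (P p)" "high (P p) < low d" using high_P_ge high_less_low d(2) by auto
  moreover have "high d < low (P q)" "low (P q) \<le> q" using low_P_le high_less_low d(3) by auto
  moreover have "low d < high d" using low_less_high_iff d(1) by simp
  moreover have "low d < m" "m < high d" using \<open>low d < high d\<close> unfolding m_def by simp_all
  then have "m \<notin> Cset" using d(1) unfolding mem_Cset by blast
  ultimately show ?thesis unfolding m_def by (intro exI[of _ m]) (auto simp: m_def)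
next
  case False
  then have "P q = P p" using low.upper_inverse_mono[of p q] \<open>p < q\<close> by simp
  then have fibre: "low (P p) \<le> p" "q \<le> high (P p)" using low_P_le high_P_ge by metis+
  then have "low (P p) < high (P p)" using \<open>p < q\<close> by linarith
  then have "P p \<in> jumps" using low_less_high_iff by blast
  then show ?thesis using fibre \<open>p < q\<close> unfolding mem_Cset by (intro exI[of _ "(p + q) / 2"]) force
qed

lemma Cset_totally_disconnected:
  assumes dense: "\<And>a b. a < b \<Longrightarrow> \<exists>d\<in>jumps. a < d \<and> d < b"
  shows "totally_disconnected_set Cset"
  unfolding totally_disconnected_set_def
proof (intro allI impI)
  fix S assume S: "S \<subseteq> Cset \<and> connected S"
  have "p = q" if pq: "p \<in> S" "q \<in> S" for p q
  proof (rule ccontr)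
    assume "p \<noteq> q"
    then obtain u v where uv: "u \<in> S" "v \<in> S" "u < v" using pq by (metis linorder_neqE_linordered_idom)
    obtain x where "u \<le> x" "x \<le> v" "x \<notin> Cset" using interval_meets_gap[OF dense uv(3)] by blast
    then show False using S connectedD_interval[of S u v x] uv by auto
  qed
  then show "\<exists>a. S \<subseteq> {a}" by blast
qed

lemma Cset_cantor:
  assumes dense: "\<And>a b. a < b \<Longrightarrow> \<exists>d\<in>jumps. a < d \<and> d < b"
  shows "cantor_set Cset"
  unfolding cantor_set_def
  using low_in_Cset Cset_periodic Cset_closed Cset_totally_disconnected[OF dense] Cset_perfect by blast

end

definition half_orbit :: "real \<Rightarrow> real \<Rightarrow> real set" where
  "half_orbit \<phi> \<tau> = {\<phi> + of_int n * \<tau> + of_int j / 2 | n j. True}"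

lemma jumps_int_decode:
  "staircase.jumps (\<lambda>k. \<phi> + of_int (int_decode k) * \<tau>) = half_orbit \<phi> \<tau>"
  unfolding staircase.jumps_def half_orbit_def
proof (intro equalityI subsetI)
  fix x assume "x \<in> {\<phi> + of_int n * \<tau> + of_int j / 2 | n j. True}"
  then obtain n j where x: "x = \<phi> + of_int n * \<tau> + of_int j / 2" by blast
  obtain k where "n = int_decode k" using surj_int_decode by blast
  then show "x \<in> {\<phi> + of_int (int_decode k) * \<tau> + of_int j / 2 | k j. True}" using x by blast
qed blast

lemma half_orbit_dense:
  assumes "\<tau> \<notin> \<rat>" and "a < b"
  shows "\<exists>d\<in>half_orbit \<phi> \<tau>. a < d \<and> d < b"
proof -
  have "(b - a) / 2 > 0" using assms(2) by simp
  then obtain h k where hk: "\<bar>of_int k * \<tau> - of_int h - ((a + b) / 2 - \<phi>)\<bar> < (b - a) / 2"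
    using sequence_of_fractional_parts_is_dense[OF assms(1)] by blast
  have "\<phi> + of_int k * \<tau> + of_int (-2 * h) / 2 \<in> half_orbit \<phi> \<tau>" unfolding half_orbit_def by blast
  moreover have "a < \<phi> + of_int k * \<tau> + of_int (-2 * h) / 2" "\<phi> + of_int k * \<tau> + of_int (-2 * h) / 2 < b"
    using hk by (auto simp: abs_less_iff field_simps)
  ultimately show ?thesis by blast
qed

lemma frac_half_orbit:
  "frac ` half_orbit \<phi> \<tau> =
    {frac (\<phi> + of_int n * \<tau>) | n. True} \<union> {frac ((\<phi> + 1/2) + of_int n * \<tau>) | n. True}"
proof -
  have "frac (\<phi> + of_int n * \<tau> + of_int j / 2) =
      (if even j then frac (\<phi> + of_int n * \<tau>) else frac ((\<phi> + 1/2) + of_int n * \<tau>))" for n j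
  proof (cases "even j")
    case True
    then obtain i where "j = 2 * i" by (auto elim: evenE)
    then show ?thesis using True by simp
  next
    case False
    then obtain i where j: "j = 2 * i + 1" by (auto elim: oddE)
    have "\<phi> + of_int n * \<tau> + of_int j / 2 = ((\<phi> + 1/2) + of_int n * \<tau>) + of_int i"
      unfolding j by (simp add: field_simps)
    then show ?thesis by (simp only: if_not_P[OF False] frac_add_of_int_right)
  qed
  note frac_cases = this
  show ?thesis unfolding half_orbit_def
  proof (intro equalityI subsetI)
    fix x assume "x \<in> frac ` {\<phi> + of_int n * \<tau> + of_int j / 2 | n j. True}"
    then obtain n j where "x = frac (\<phi> + of_int n * \<tau> + of_int j / 2)" by blast
    then show "x \<in> {frac (\<phi> + of_int n * \<tau>) | n. True} \<union> {frac ((\<phi> + 1/2) + of_int n * \<tau>) | n. True}"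
      unfolding frac_cases by auto
  next
    fix x
    assume "x \<in> {frac (\<phi> + of_int n * \<tau>) | n. True} \<union> {frac ((\<phi> + 1/2) + of_int n * \<tau>) | n. True}"
    then obtain n j where "x = frac (\<phi> + of_int n * \<tau> + of_int j / 2)"
    proof (elim UnE CollectE exE conjE)
      fix n assume "x = frac (\<phi> + of_int n * \<tau>)"
      then show thesis using that[of n 0] frac_cases[of n 0] by simp
    next
      fix n assume "x = frac ((\<phi> + 1/2) + of_int n * \<tau>)"
      then show thesis using that[of n 1] frac_cases[of n 1] by simp
    qed
    then show "x \<in> frac ` {\<phi> + of_int n * \<tau> + of_int j / 2 | n j. True}" by blast
  qed
qed

theorem lemma3p2:
  fixes \<tau> \<phi> :: real
  assumes "\<tau> \<notin> \<rat>"
  shows "\<exists>C F. cantor_set C \<and> (\<forall>x. x \<in> C \<longleftrightarrow> x + 1/2 \<in> C) \<and> cantor_function C F \<and>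
    frac ` F ` accessible C =
      {frac (\<phi> + of_int n * \<tau>) | n. True} \<union> {frac ((\<phi> + 1/2) + of_int n * \<tau>) | n. True} \<and>
    (\<forall>x. F (x + 1/2) - (F x + 1/2) \<in> \<int>)"
proof -
  define c where "c = (\<lambda>k. \<phi> + of_int (int_decode k) * \<tau>)"
  interpret staircase c .
  have jumps: "jumps = half_orbit \<phi> \<tau>" unfolding c_def by (rule jumps_int_decode)
  have dense: "\<exists>d\<in>jumps. a < d \<and> d < b" if "a < b" for a b
    unfolding jumps using half_orbit_dense[OF assms that] .
  show ?thesis
  proof (intro exI conjI allI)
    show "cantor_set Cset" using Cset_cantor[OF dense] .
    show "x \<in> Cset \<longleftrightarrow> x + 1/2 \<in> Cset" for x by (rule Cset_half_invariant)
    show "cantor_function Cset P" by (rule P_cantor_function)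
    show "frac ` P ` accessible Cset =
        {frac (\<phi> + of_int n * \<tau>) | n. True} \<union> {frac ((\<phi> + 1/2) + of_int n * \<tau>) | n. True}"
      unfolding P_accessible jumps by (rule frac_half_orbit)
    show "P (x + 1/2) - (P x + 1/2) \<in> \<int>" for x by (simp add: P_half_shift)
  qed
qed

end
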